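(* Let $\mathbb{K}$ be a field, $R=\mathbb{K}\langle x,y\rangle/(xy-1)$, $I=\langle1-yx\rangle$. Let $\mathcal{C}$ be the category of weak splitting pairs and let $\Gamma$ be the quiver with vertices $u,v$, an arrow $e:v\to u$ and a loop $f$ at $v$. For a weak splitting pair $\pi=(M,\alpha)$ define the $\Gamma$-representation $\Xi(\pi)=(M_0,\operatorname{im}\alpha,\psi_e,\psi_f)$, and for a morphism $\varphi:(M,\alpha)\to(N,\beta)$ in $\mathcal{C}$ let $\Xi(\varphi)$ consist of the restrictions $\varphi|_{M_0}:M_0\to N_0$ and $\varphi|_{\operatorname{im}\alpha}:\operatorname{im}\alpha\to\operatorname{im}\beta$. Then $\Xi$ is a well-defined functor $\mathcal{C}\to\operatorname{Rep}(\Gamma)$, and after corestriction it is a functor $\Xi:\mathcal{C}\to\mathcal{D}$, where $\mathcal{D}$ is the full subcategory of $\operatorname{Rep}(\Gamma)$ of representations in which the map on the loop $f$ is invertible.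
   Context: A weak splitting pair is a pair $(M,\alpha)$ where $M$ is a left $R$-module and $\alpha:M/IM\to M$ is a $\mathbb{K}[x]$-linear splitting of the canonical projection $M\to M/IM$ (so $M=IM\oplus\operatorname{im}\alpha$ as $\mathbb{K}[x]$-modules). Morphisms $(M,\alpha)\to(N,\beta)$ in $\mathcal{C}$ are $R$-module homomorphisms $\varphi:M\to N$ with $\operatorname{im}(\varphi\circ\alpha)\subseteq\operatorname{im}\beta$. For an $R$-module $N$, $N_0=\{n\in N: xn=0\}$. For $m\in\operatorname{im}\alpha$ write $ym=m_1+m_2$ with $m_1\in IM$, $m_2\in\operatorname{im}\alpha$ (then $xm_1=0$); $\psi_e:\operatorname{im}\alpha\to M_0$ is $m\mapsto m_1$, and $\psi_f:\operatorname{im}\alpha\to\operatorname{im}\alpha$ is left multiplication by $x$. A representation of $\Gamma$ is a quadruple $(M_u,M_v,\psi_e:M_v\to M_u,\psi_f:M_v\to M_v)$ of vector spaces and linear maps; morphisms are pairs of linear maps commuting with $\psi_e,\psi_f$. *)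

theory Defs
  imports Main "HOL.Vector_Spaces" "HOL-Library.FuncSet"
begin

text \<open>A left module over R = K<x,y>/(xy-1) is a K-vector space (on the carrier type) with
  two K-linear endomorphisms X (action of x) and Y (action of y) such that X (Y m) = m.\<close>
definition jmod :: "('k::field \<Rightarrow> 'a::ab_group_add \<Rightarrow> 'a) \<Rightarrow> ('a \<Rightarrow> 'a) \<Rightarrow> ('a \<Rightarrow> 'a) \<Rightarrow> bool" where
  "jmod s X Y \<longleftrightarrow> vector_space s \<and> Vector_Spaces.linear s s X \<and> Vector_Spaces.linear s s Y
     \<and> (\<forall>m. X (Y m) = m)"

text \<open>IM for the two-sided ideal I = <1 - yx>: the R-submodule of M generated by
  the elements (1 - yx) m (since I = R(1-yx)R and RM = M).\<close>
definition IM :: "('k::field \<Rightarrow> 'a::ab_group_add \<Rightarrow> 'a) \<Rightarrow> ('a \<Rightarrow> 'a) \<Rightarrow> ('a \<Rightarrow> 'a) \<Rightarrow> 'a set" where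
  "IM s X Y = \<Inter>{S. module.subspace s S \<and> X ` S \<subseteq> S \<and> Y ` S \<subseteq> S
                     \<and> range (\<lambda>m. m - Y (X m)) \<subseteq> S}"

text \<open>The map alpha : M/IM \<rightarrow> M is represented by its
  composite a = alpha \<circ> p with the projection p : M \<rightarrow> M/IM; i.e. a is K-linear, vanishes on IM
  (factors through M/IM), commutes with x (K[x]-linearity, x acting on M/IM via [m] \<mapsto> [xm]),
  and p \<circ> alpha = id, i.e. a m - m \<in> IM.  Then im alpha = range a.\<close>
definition wsp :: "('k::field \<Rightarrow> 'a::ab_group_add \<Rightarrow> 'a) \<Rightarrow> ('a \<Rightarrow> 'a) \<Rightarrow> ('a \<Rightarrow> 'a) \<Rightarrow> ('a \<Rightarrow> 'a) \<Rightarrow> bool" where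
  "wsp s X Y a \<longleftrightarrow> jmod s X Y \<and> Vector_Spaces.linear s s a
     \<and> (\<forall>m \<in> IM s X Y. a m = 0)
     \<and> (\<forall>m. a (X m) = X (a m))
     \<and> (\<forall>m. a m - m \<in> IM s X Y)"

definition wsp_hom :: "('k::field \<Rightarrow> 'a::ab_group_add \<Rightarrow> 'a) \<Rightarrow> ('a \<Rightarrow> 'a) \<Rightarrow> ('a \<Rightarrow> 'a) \<Rightarrow> ('a \<Rightarrow> 'a)
     \<Rightarrow> ('k \<Rightarrow> 'b::ab_group_add \<Rightarrow> 'b) \<Rightarrow> ('b \<Rightarrow> 'b) \<Rightarrow> ('b \<Rightarrow> 'b) \<Rightarrow> ('b \<Rightarrow> 'b)
     \<Rightarrow> ('a \<Rightarrow> 'b) \<Rightarrow> bool" where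
  "wsp_hom s X Y a t X' Y' b phi \<longleftrightarrow>
     Vector_Spaces.linear s t phi \<and> (\<forall>m. phi (X m) = X' (phi m)) \<and> (\<forall>m. phi (Y m) = Y' (phi m))
     \<and> phi ` range a \<subseteq> range b"

definition M0 :: "('a::ab_group_add \<Rightarrow> 'a) \<Rightarrow> 'a set" where
  "M0 X = {m. X m = 0}"

definition psi_e :: "('k::field \<Rightarrow> 'a::ab_group_add \<Rightarrow> 'a) \<Rightarrow> ('a \<Rightarrow> 'a) \<Rightarrow> ('a \<Rightarrow> 'a) \<Rightarrow> ('a \<Rightarrow> 'a)
     \<Rightarrow> 'a \<Rightarrow> 'a" where
  "psi_e s X Y a m = (THE m1. m1 \<in> IM s X Y \<and> Y m - m1 \<in> range a)"

definition lin_on :: "('k::field \<Rightarrow> 'a::ab_group_add \<Rightarrow> 'a) \<Rightarrow> ('k \<Rightarrow> 'b::ab_group_add \<Rightarrow> 'b)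
     \<Rightarrow> 'a set \<Rightarrow> ('a \<Rightarrow> 'b) \<Rightarrow> bool" where
  "lin_on s t A f \<longleftrightarrow> (\<forall>p\<in>A. \<forall>q\<in>A. f (p + q) = f p + f q) \<and> (\<forall>c. \<forall>p\<in>A. f (s c p) = t c (f p))"

text \<open>Representations of Gamma (vertices u, v; arrow e : v \<rightarrow> u; loop f at v),
  realised on subspaces Mu, Mv of an ambient K-vector space.\<close>
definition gamma_rep :: "('k::field \<Rightarrow> 'a::ab_group_add \<Rightarrow> 'a) \<Rightarrow> 'a set \<times> 'a set \<times> ('a \<Rightarrow> 'a) \<times> ('a \<Rightarrow> 'a) \<Rightarrow> bool" where
  "gamma_rep s R \<longleftrightarrow> (case R of (Mu, Mv, pe, pf) \<Rightarrow>
     vector_space s \<and> module.subspace s Mu \<and> module.subspace s Mv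
     \<and> pe \<in> Mv \<rightarrow> Mu \<and> lin_on s s Mv pe \<and> pf \<in> Mv \<rightarrow> Mv \<and> lin_on s s Mv pf)"

definition gamma_rep_D :: "('k::field \<Rightarrow> 'a::ab_group_add \<Rightarrow> 'a) \<Rightarrow> 'a set \<times> 'a set \<times> ('a \<Rightarrow> 'a) \<times> ('a \<Rightarrow> 'a) \<Rightarrow> bool" where
  "gamma_rep_D s R \<longleftrightarrow> gamma_rep s R \<and> (case R of (Mu, Mv, pe, pf) \<Rightarrow> bij_betw pf Mv Mv)"

definition gamma_hom :: "('k::field \<Rightarrow> 'a::ab_group_add \<Rightarrow> 'a) \<Rightarrow> ('k \<Rightarrow> 'b::ab_group_add \<Rightarrow> 'b)
     \<Rightarrow> 'a set \<times> 'a set \<times> ('a \<Rightarrow> 'a) \<times> ('a \<Rightarrow> 'a)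
     \<Rightarrow> 'b set \<times> 'b set \<times> ('b \<Rightarrow> 'b) \<times> ('b \<Rightarrow> 'b)
     \<Rightarrow> ('a \<Rightarrow> 'b) \<times> ('a \<Rightarrow> 'b) \<Rightarrow> bool" where
  "gamma_hom s t R S g \<longleftrightarrow> (case R of (Mu, Mv, pe, pf) \<Rightarrow> case S of (Nu, Nv, qe, qf) \<Rightarrow>
     case g of (gu, gv) \<Rightarrow>
       gu \<in> Mu \<rightarrow> Nu \<and> lin_on s t Mu gu \<and> gv \<in> Mv \<rightarrow> Nv \<and> lin_on s t Mv gv
       \<and> (\<forall>m\<in>Mv. gu (pe m) = qe (gv m)) \<and> (\<forall>m\<in>Mv. gv (pf m) = qf (gv m)))"

definition gamma_id :: "'a set \<times> 'a set \<times> ('a \<Rightarrow> 'a) \<times> ('a \<Rightarrow> 'a) \<Rightarrow> ('a \<Rightarrow> 'a) \<times> ('a \<Rightarrow> 'a)" where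
  "gamma_id R = (case R of (Mu, Mv, pe, pf) \<Rightarrow> (restrict id Mu, restrict id Mv))"

definition gamma_comp :: "'a set \<times> 'a set \<times> ('a \<Rightarrow> 'a) \<times> ('a \<Rightarrow> 'a)
     \<Rightarrow> ('b \<Rightarrow> 'c) \<times> ('b \<Rightarrow> 'c) \<Rightarrow> ('a \<Rightarrow> 'b) \<times> ('a \<Rightarrow> 'b) \<Rightarrow> ('a \<Rightarrow> 'c) \<times> ('a \<Rightarrow> 'c)" where
  "gamma_comp R h g = (case R of (Mu, Mv, pe, pf) \<Rightarrow>
     (compose Mu (fst h) (fst g), compose Mv (snd h) (snd g)))"

definition Xi_obj :: "('k::field \<Rightarrow> 'a::ab_group_add \<Rightarrow> 'a) \<Rightarrow> ('a \<Rightarrow> 'a) \<Rightarrow> ('a \<Rightarrow> 'a) \<Rightarrow> ('a \<Rightarrow> 'a)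
     \<Rightarrow> 'a set \<times> 'a set \<times> ('a \<Rightarrow> 'a) \<times> ('a \<Rightarrow> 'a)" where
  "Xi_obj s X Y a = (M0 X, range a, psi_e s X Y a, X)"

definition Xi_hom :: "('a::ab_group_add \<Rightarrow> 'a) \<Rightarrow> ('a \<Rightarrow> 'a) \<Rightarrow> ('a \<Rightarrow> 'b) \<Rightarrow> ('a \<Rightarrow> 'b) \<times> ('a \<Rightarrow> 'b)" where
  "Xi_hom X a phi = (restrict phi (M0 X), restrict phi (range a))"

end

theory Submission
  imports Defs
begin

text \<open>Since \<alpha> is a K[x]-linear projection onto a complement of IM, every element splits as
  m = (m - \<alpha> m) + \<alpha> m, so psi_e m = y m - \<alpha> (y m); this is killed by x because xy = 1 and \<alpha>
  commutes with x.  On im \<alpha>, x is injective because \<alpha> vanishes on m - yxm \<in> IM, and surjective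
  because x (\<alpha> (y n)) = \<alpha> n.  An R-module map preserves IM, so it intertwines the two
  projections, which makes psi_e natural; functoriality is then bookkeeping with restrictions.\<close>

lemma linear_map_diff: "Vector_Spaces.linear s t f \<Longrightarrow> f (x - y) = f x - f y"
  by (rule module_hom.diff[of s t]) (simp add: module_hom_iff_linear)

lemma linear_map_zero: "Vector_Spaces.linear s t f \<Longrightarrow> f 0 = 0"
  by (rule module_hom.zero[of s t]) (simp add: module_hom_iff_linear)

lemma subspace_range_linear: "Vector_Spaces.linear s t f \<Longrightarrow> module.subspace t (range f)"
  by (rule module_hom.subspace_image[of s t])
    (auto simp: module_hom_iff_linear module_iff_vector_space linear_iff intro: module.subspace_UNIV)

lemma subspace_M0: "Vector_Spaces.linear s s X \<Longrightarrow> module.subspace s (M0 X)"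
  unfolding M0_def by (rule module_hom.subspace_kernel[of s s]) (simp add: module_hom_iff_linear)

lemma lin_on_linear: "Vector_Spaces.linear s t f \<Longrightarrow> lin_on s t A f"
  by (simp add: lin_on_def linear_iff)

lemma lin_on_restrict:
  assumes f: "Vector_Spaces.linear s t f" and A: "module.subspace s A"
  shows "lin_on s t A (restrict f A)"
proof -
  have "module s" using f by (simp add: linear_iff module_iff_vector_space)
  then show ?thesis
    using f A by (simp add: lin_on_def linear_iff module.subspace_add module.subspace_scale)
qed

lemma linear_maps_M0:
  assumes "Vector_Spaces.linear s t phi" and "\<And>m. phi (X m) = X' (phi m)"
  shows "phi ` M0 X \<subseteq> M0 X'"
proof
  fix n assume "n \<in> phi ` M0 X"
  then obtain m where "n = phi m" and "X m = 0" by (auto simp: M0_def)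
  then have "X' n = phi 0" using assms(2) by metis
  then show "n \<in> M0 X'" using linear_map_zero[OF assms(1)] by (simp add: M0_def)
qed

lemma IM_least:
  assumes "module.subspace s S" and "X ` S \<subseteq> S" and "Y ` S \<subseteq> S" and "\<And>m. m - Y (X m) \<in> S"
  shows "IM s X Y \<subseteq> S"
  using assms unfolding IM_def by blast

lemma IM_generator: "m - Y (X m) \<in> IM s X Y"
  unfolding IM_def by blast

lemma IM_closed_X: "m \<in> IM s X Y \<Longrightarrow> X m \<in> IM s X Y"
  unfolding IM_def by blast

lemma IM_closed_Y: "m \<in> IM s X Y \<Longrightarrow> Y m \<in> IM s X Y"
  unfolding IM_def by blast

lemma subspace_IM: "vector_space s \<Longrightarrow> module.subspace s (IM s X Y)"
  unfolding IM_def by (rule module.subspace_Inter) (auto simp: module_iff_vector_space)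

lemma linear_image_IM_subset:
  assumes phi: "Vector_Spaces.linear s t phi"
    and X: "\<And>m. phi (X m) = X' (phi m)" and Y: "\<And>m. phi (Y m) = Y' (phi m)"
  shows "phi ` IM s X Y \<subseteq> IM t X' Y'"
proof -
  have "IM s X Y \<subseteq> phi -` IM t X' Y'"
  proof (rule IM_least)
    show "module.subspace s (phi -` IM t X' Y')"
      using phi by (intro module_hom.subspace_vimage subspace_IM)
        (auto simp: module_hom_iff_linear linear_iff intro: subspace_IM)
    show "X ` (phi -` IM t X' Y') \<subseteq> phi -` IM t X' Y'" using X IM_closed_X by auto
    show "Y ` (phi -` IM t X' Y') \<subseteq> phi -` IM t X' Y'" using Y IM_closed_Y by auto
    show "m - Y (X m) \<in> phi -` IM t X' Y'" for m
      using linear_map_diff[OF phi] X Y IM_generator by simp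
  qed
  then show ?thesis by blast
qed

context
  fixes s :: "'k::field \<Rightarrow> 'a::ab_group_add \<Rightarrow> 'a" and X Y a :: "'a \<Rightarrow> 'a"
  assumes wsp: "wsp s X Y a"
begin

lemma
  shows wsp_vector_space: "vector_space s"
    and wsp_linear_X: "Vector_Spaces.linear s s X"
    and wsp_linear_Y: "Vector_Spaces.linear s s Y"
    and wsp_X_Y: "X (Y m) = m"
    and wsp_linear_a: "Vector_Spaces.linear s s a"
    and wsp_a_IM: "n \<in> IM s X Y \<Longrightarrow> a n = 0"
    and wsp_a_X: "a (X m) = X (a m)"
    and wsp_a_minus_self: "a m - m \<in> IM s X Y"
  using wsp by (auto simp: wsp_def jmod_def)

lemma wsp_a_idem: "a (a m) = a m"
  using linear_map_diff[OF wsp_linear_a, of "a m" m] wsp_a_IM[OF wsp_a_minus_self] by simp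

lemma wsp_IM_diff: "p \<in> IM s X Y \<Longrightarrow> q \<in> IM s X Y \<Longrightarrow> p - q \<in> IM s X Y"
  by (intro module.subspace_diff[of s])
    (simp_all add: module_iff_vector_space wsp_vector_space subspace_IM)

lemma wsp_range_diff: "p \<in> range a \<Longrightarrow> q \<in> range a \<Longrightarrow> p - q \<in> range a"
  by (intro module.subspace_diff[of s])
    (simp_all add: module_iff_vector_space wsp_vector_space subspace_range_linear[OF wsp_linear_a])

lemma wsp_self_minus_a: "m - a m \<in> IM s X Y"
  using wsp_IM_diff[OF wsp_a_minus_self[of 0] wsp_a_minus_self[of m]]
  by (simp add: linear_map_zero[OF wsp_linear_a])

lemma wsp_range_IM_zero: "n \<in> range a \<Longrightarrow> n \<in> IM s X Y \<Longrightarrow> n = 0"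
  using wsp_a_idem wsp_a_IM by (metis imageE)

lemma psi_e_eq: "psi_e s X Y a m = Y m - a (Y m)"
  unfolding psi_e_def
proof (rule the_equality)
  show "Y m - a (Y m) \<in> IM s X Y \<and> Y m - (Y m - a (Y m)) \<in> range a"
    using wsp_self_minus_a by auto
next
  fix m1 assume m1: "m1 \<in> IM s X Y \<and> Y m - m1 \<in> range a"
  have "m1 - (Y m - a (Y m)) \<in> IM s X Y"
    using m1 wsp_self_minus_a wsp_IM_diff by blast
  moreover have "m1 - (Y m - a (Y m)) = a (Y m) - (Y m - m1)"
    by (simp add: algebra_simps)
  moreover have "a (Y m) - (Y m - m1) \<in> range a"
    using m1 wsp_range_diff by blast
  ultimately show "m1 = Y m - a (Y m)"
    using wsp_range_IM_zero by fastforce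
qed

lemma linear_psi_e: "Vector_Spaces.linear s s (psi_e s X Y a)"
  using wsp_linear_Y wsp_linear_a
  by (simp add: psi_e_eq linear_iff algebra_simps
      module.scale_right_diff_distrib module_iff_vector_space)

lemma psi_e_in_M0: "m \<in> range a \<Longrightarrow> psi_e s X Y a m \<in> M0 X"
proof -
  assume "m \<in> range a"
  then have m: "a m = m" using wsp_a_idem by auto
  have "X (psi_e s X Y a m) = X (Y m) - X (a (Y m))"
    unfolding psi_e_eq using linear_map_diff[OF wsp_linear_X] .
  also have "\<dots> = m - a m" using wsp_X_Y wsp_a_X by metis
  finally show ?thesis using m by (simp add: M0_def)
qed

lemma X_maps_range: "m \<in> range a \<Longrightarrow> X m \<in> range a"
  using wsp_a_X by (metis imageE rangeI)

lemma bij_betw_X_range: "bij_betw X (range a) (range a)"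
proof (rule bij_betw_imageI)
  show "inj_on X (range a)"
  proof (rule module_hom.inj_on_iff_eq_0[of s s, THEN iffD2])
    show "module_hom s s X" using wsp_linear_X by (simp add: module_hom_iff_linear)
    show "module.subspace s (range a)" using subspace_range_linear[OF wsp_linear_a] .
    show "\<forall>m\<in>range a. X m = 0 \<longrightarrow> m = 0"
    proof (intro ballI impI)
      fix m assume "m \<in> range a" and "X m = 0"
      then have "m = a m" using wsp_a_idem by auto
      also have "\<dots> = a (Y (X m))"
        using linear_map_diff[OF wsp_linear_a] wsp_a_IM[OF IM_generator] by (metis eq_iff_diff_eq_0)
      finally show "m = 0"
        using \<open>X m = 0\<close> linear_map_zero[OF wsp_linear_Y] linear_map_zero[OF wsp_linear_a] by simp
    qed
  qed
  have "a n \<in> X ` range a" for n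
    using wsp_a_X[of "Y n"] wsp_X_Y by (metis rangeI image_eqI)
  then show "X ` range a = range a" using X_maps_range by blast
qed

lemma gamma_rep_Xi_obj: "gamma_rep s (Xi_obj s X Y a)"
  unfolding gamma_rep_def Xi_obj_def prod.case
  using wsp_vector_space subspace_M0[OF wsp_linear_X] subspace_range_linear[OF wsp_linear_a]
    psi_e_in_M0 X_maps_range lin_on_linear[OF linear_psi_e] lin_on_linear[OF wsp_linear_X]
  by (intro conjI funcsetI)

lemma gamma_rep_D_Xi_obj: "gamma_rep_D s (Xi_obj s X Y a)"
  unfolding gamma_rep_D_def using gamma_rep_Xi_obj bij_betw_X_range by (simp add: Xi_obj_def)

end

lemma wsp_hom_commutes_with_projection:
  assumes wa: "wsp s X Y a" and wb: "wsp t X' Y' b" and h: "wsp_hom s X Y a t X' Y' b phi"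
  shows "b (phi n) = phi (a n)"
proof -
  have phi: "Vector_Spaces.linear s t phi"
    and X: "\<And>m. phi (X m) = X' (phi m)" and Y: "\<And>m. phi (Y m) = Y' (phi m)"
    and "phi (a n) \<in> range b"
    using h by (auto simp: wsp_hom_def)
  then have fixed: "b (phi (a n)) = phi (a n)" using wsp_a_idem[OF wb] by auto
  have "phi (n - a n) \<in> IM t X' Y'"
    using linear_image_IM_subset[of s t phi X X' Y Y', OF phi X Y] wsp_self_minus_a[OF wa] by blast
  then have killed: "b (phi (n - a n)) = 0" by (rule wsp_a_IM[OF wb])
  have "b (phi n) = b (phi (a n) + phi (n - a n))"
    by (simp add: linear_map_diff[OF phi])
  also have "\<dots> = b (phi (a n)) + b (phi (n - a n))"
    using wsp_linear_a[OF wb] by (simp add: linear_iff)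
  finally show ?thesis using fixed killed by simp
qed

lemma psi_e_natural:
  assumes wa: "wsp s X Y a" and wb: "wsp t X' Y' b" and h: "wsp_hom s X Y a t X' Y' b phi"
  shows "phi (psi_e s X Y a m) = psi_e t X' Y' b (phi m)"
proof -
  have phi: "Vector_Spaces.linear s t phi" and Y: "phi (Y m) = Y' (phi m)"
    using h by (auto simp: wsp_hom_def)
  have "phi (psi_e s X Y a m) = phi (Y m) - phi (a (Y m))"
    unfolding psi_e_eq[OF wa] by (rule linear_map_diff[OF phi])
  also have "\<dots> = Y' (phi m) - b (Y' (phi m))"
    using wsp_hom_commutes_with_projection[OF wa wb h, of "Y m"] Y by simp
  finally show ?thesis by (simp add: psi_e_eq[OF wb])
qed

lemma gamma_hom_Xi_hom:
  assumes wa: "wsp s X Y a" and wb: "wsp t X' Y' b" and h: "wsp_hom s X Y a t X' Y' b phi"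
  shows "gamma_hom s t (Xi_obj s X Y a) (Xi_obj t X' Y' b) (Xi_hom X a phi)"
proof -
  have phi: "Vector_Spaces.linear s t phi" and X: "\<And>m. phi (X m) = X' (phi m)"
    and range: "phi ` range a \<subseteq> range b"
    using h by (auto simp: wsp_hom_def)
  show ?thesis
    unfolding gamma_hom_def Xi_obj_def Xi_hom_def prod.case
  proof (intro conjI ballI)
    show "restrict phi (M0 X) \<in> M0 X \<rightarrow> M0 X'"
      using linear_maps_M0[of s t phi X X', OF phi X] by auto
    show "restrict phi (range a) \<in> range a \<rightarrow> range b"
      using range by auto
    show "lin_on s t (M0 X) (restrict phi (M0 X))"
      by (rule lin_on_restrict[OF phi subspace_M0[OF wsp_linear_X[OF wa]]])
    show "lin_on s t (range a) (restrict phi (range a))"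
      by (rule lin_on_restrict[OF phi subspace_range_linear[OF wsp_linear_a[OF wa]]])
    fix m assume m: "m \<in> range a"
    show "restrict phi (M0 X) (psi_e s X Y a m) = psi_e t X' Y' b (restrict phi (range a) m)"
      using m psi_e_in_M0[OF wa m] psi_e_natural[OF wa wb h] by simp
    show "restrict phi (range a) (X m) = X' (restrict phi (range a) m)"
      using m X_maps_range[OF wa m] X by simp
  qed
qed

lemma Xi_hom_comp:
  assumes "phi ` M0 X \<subseteq> M0 X'" and "phi ` range a \<subseteq> range b"
  shows "Xi_hom X a (chi \<circ> phi) = gamma_comp (Xi_obj s X Y a) (Xi_hom X' b chi) (Xi_hom X a phi)"
  using assms
  by (auto simp: Xi_hom_def gamma_comp_def Xi_obj_def compose_def fun_eq_iff image_subset_iff)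

theorem theorem5:
  fixes s :: "'k::field \<Rightarrow> 'a::ab_group_add \<Rightarrow> 'a"
    and t :: "'k \<Rightarrow> 'b::ab_group_add \<Rightarrow> 'b"
    and u :: "'k \<Rightarrow> 'c::ab_group_add \<Rightarrow> 'c"
    and X Y a :: "'a \<Rightarrow> 'a" and X' Y' b :: "'b \<Rightarrow> 'b" and X'' Y'' c :: "'c \<Rightarrow> 'c"
    and phi :: "'a \<Rightarrow> 'b" and chi :: "'b \<Rightarrow> 'c"
  shows
    "(wsp s X Y a \<longrightarrow> gamma_rep s (Xi_obj s X Y a) \<and> gamma_rep_D s (Xi_obj s X Y a))
     \<and> (wsp s X Y a \<and> wsp t X' Y' b \<and> wsp_hom s X Y a t X' Y' b phi
          \<longrightarrow> gamma_hom s t (Xi_obj s X Y a) (Xi_obj t X' Y' b) (Xi_hom X a phi))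
     \<and> (wsp s X Y a \<longrightarrow> Xi_hom X a id = gamma_id (Xi_obj s X Y a))
     \<and> (wsp s X Y a \<and> wsp t X' Y' b \<and> wsp u X'' Y'' c
          \<and> wsp_hom s X Y a t X' Y' b phi \<and> wsp_hom t X' Y' b u X'' Y'' c chi
          \<longrightarrow> Xi_hom X a (chi \<circ> phi)
                = gamma_comp (Xi_obj s X Y a) (Xi_hom X' b chi) (Xi_hom X a phi))"
proof (intro conjI impI)
  assume "wsp s X Y a"
  then show "gamma_rep s (Xi_obj s X Y a)" "gamma_rep_D s (Xi_obj s X Y a)"
    by (rule gamma_rep_Xi_obj, rule gamma_rep_D_Xi_obj)
next
  assume "wsp s X Y a \<and> wsp t X' Y' b \<and> wsp_hom s X Y a t X' Y' b phi"
  then show "gamma_hom s t (Xi_obj s X Y a) (Xi_obj t X' Y' b) (Xi_hom X a phi)"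
    using gamma_hom_Xi_hom by blast
next
  show "Xi_hom X a id = gamma_id (Xi_obj s X Y a)"
    by (simp add: Xi_hom_def gamma_id_def Xi_obj_def)
next
  assume "wsp s X Y a \<and> wsp t X' Y' b \<and> wsp u X'' Y'' c
          \<and> wsp_hom s X Y a t X' Y' b phi \<and> wsp_hom t X' Y' b u X'' Y'' c chi"
  then have phi: "Vector_Spaces.linear s t phi" "\<And>m. phi (X m) = X' (phi m)"
    and "phi ` range a \<subseteq> range b"
    by (auto simp: wsp_hom_def)
  then show "Xi_hom X a (chi \<circ> phi) = gamma_comp (Xi_obj s X Y a) (Xi_hom X' b chi) (Xi_hom X a phi)"
    using linear_maps_M0[of s t phi X X', OF phi] by (intro Xi_hom_comp)
qed

end
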